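(* Let $Y$ be an upwards skip-free Lévy chain with $h=1$, i.e. a compound Poisson process whose Lévy measure $\nu$ satisfies $\mathrm{supp}(\nu)\subset\mathbb Z$, $\mathrm{supp}(\nu|_{(0,\infty)})=\{1\}$ and $\nu(\{1\})>0$. Let $q\ge0$ and let $W^{(q)}$, $Z^{(q)}$ be its scale functions. Then for all $n\in\mathbb N\cup\{0\}$: $$W^{(q)}(n+1)=W^{(q)}(0)+\sum_{k=1}^{n+1}W^{(q)}(n+1-k)\frac{q+\nu((-\infty,-k])}{\nu(\{1\})},\qquad W^{(q)}(0)=\frac1{\nu(\{1\})},$$ and, with $\widetilde{Z^{(q)}}:=Z^{(q)}-1$, $$\widetilde{Z^{(q)}}(n+1)=(n+1)\frac{q}{\nu(\{1\})}+\sum_{k=1}^{n}\widetilde{Z^{(q)}}(n+1-k)\frac{q+\nu((-\infty,-k])}{\nu(\{1\})},\qquad \widetilde{Z^{(q)}}(0)=0.$$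
   Context: The Laplace exponent of $Y$ is $\varphi(\beta)=\int_{\mathbb R}(e^{\beta x}-1)\nu(dx)$, $\Re\beta\ge0$; $\varphi|_{[0,\infty)}$ is strictly convex with $\varphi(\beta)\to\infty$ as $\beta\to\infty$. Let $\Phi(q)$ be the largest root of $\varphi(\beta)=q$ in $[0,\infty)$. The scale function $W^{(q)}:\mathbb R\to[0,\infty)$ vanishes on $(-\infty,0)$ and on $[0,\infty)$ is the unique right-continuous, piecewise constant function of exponential order with $\int_0^\infty e^{-\beta x}W^{(q)}(x)dx=\frac{e^{\beta}-1}{\beta(\varphi(\beta)-q)}$ for $\beta>\Phi(q)$; and $Z^{(q)}(x)=1+q\int_0^{\lfloor x\rfloor}W^{(q)}(y)dy$, $x\in\mathbb R$. *)

theory Defs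
  imports "HOL-Analysis.Analysis"
begin

text \<open>An upwards skip-free Levy chain with h = 1 is a compound Poisson process whose
Levy measure is supported on the integers; we represent the Levy measure by its
point masses nu :: int => real.\<close>

definition skip_free_levy_measure :: "(int \<Rightarrow> real) \<Rightarrow> bool" where
  "skip_free_levy_measure nu \<longleftrightarrow>
     (\<forall>k. 0 \<le> nu k) \<and> nu 0 = 0 \<and> nu summable_on UNIV \<and>
     (\<forall>k\<ge>2. nu k = 0) \<and> 0 < nu 1"

definition laplace_exp :: "(int \<Rightarrow> real) \<Rightarrow> real \<Rightarrow> real" where
  "laplace_exp nu \<beta> = (\<Sum>\<^sub>\<infinity>k\<in>UNIV. (exp (\<beta> * of_int k) - 1) * nu k)"

definition Phi :: "(int \<Rightarrow> real) \<Rightarrow> real \<Rightarrow> real" where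
  "Phi nu q = Sup {\<beta>. 0 \<le> \<beta> \<and> laplace_exp nu \<beta> = q}"

definition piecewise_constant :: "(real \<Rightarrow> real) \<Rightarrow> bool" where
  "piecewise_constant W \<longleftrightarrow>
     (\<forall>a b. finite {x\<in>{a..b}. \<not> (\<exists>e>0. \<forall>y. \<bar>y - x\<bar> < e \<longrightarrow> W y = W x)})"

definition exp_order :: "(real \<Rightarrow> real) \<Rightarrow> bool" where
  "exp_order W \<longleftrightarrow> (\<exists>C c. \<forall>x\<ge>0. \<bar>W x\<bar> \<le> C * exp (c * x))"

definition is_scale_W :: "(int \<Rightarrow> real) \<Rightarrow> real \<Rightarrow> (real \<Rightarrow> real) \<Rightarrow> bool" where
  "is_scale_W nu q W \<longleftrightarrow>
     (\<forall>x. 0 \<le> W x) \<and> (\<forall>x<0. W x = 0) \<and>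
     (\<forall>x. continuous (at_right x) W) \<and> piecewise_constant W \<and> exp_order W \<and>
     (\<forall>\<beta>>Phi nu q. ((\<lambda>x. exp (- \<beta> * x) * W x) has_integral
         ((exp \<beta> - 1) / (\<beta> * (laplace_exp nu \<beta> - q)))) {0..})"

definition scale_W :: "(int \<Rightarrow> real) \<Rightarrow> real \<Rightarrow> real \<Rightarrow> real" where
  "scale_W nu q = (THE W. is_scale_W nu q W)"

definition scale_Z :: "(int \<Rightarrow> real) \<Rightarrow> real \<Rightarrow> real \<Rightarrow> real" where
  "scale_Z nu q x = 1 + q * integral {0..real_of_int \<lfloor>x\<rfloor>} (scale_W nu q)"

definition tail :: "(int \<Rightarrow> real) \<Rightarrow> nat \<Rightarrow> real" where
  "tail nu k = (\<Sum>\<^sub>\<infinity>j\<in>{..- int k}. nu j)"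

end

theory Submission
  imports Defs "HOL-Real_Asymp.Real_Asymp"
begin

(*
  For an upwards skip-free chain the scale function W^(q) is the step
  function x |-> w (floor x), where w is the renewal sequence
      w n = 1/nu{1} + sum_{k=1..n} w (n - k) * (q + nu((-inf, -k])) / nu{1}.
  Both recursions of the corollary are then read off from this one: the recursion for W
  is the defining equation of w, and the one for Z^(q) - 1 = q * (partial sums of w)
  follows by summing it.
*)

definition locally_constant_at :: "(real \<Rightarrow> real) \<Rightarrow> real \<Rightarrow> bool" where
  "locally_constant_at f x \<longleftrightarrow> (\<exists>e>0. \<forall>y. \<bar>y - x\<bar> < e \<longrightarrow> f y = f x)"

lemma piecewise_constant_iff:
  "piecewise_constant f \<longleftrightarrow> (\<forall>a b. finite {x\<in>{a..b}. \<not> locally_constant_at f x})"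
  by (simp add: piecewise_constant_def locally_constant_at_def)

lemma locally_constant_at_diff:
  assumes "locally_constant_at f x" "locally_constant_at g x"
  shows "locally_constant_at (\<lambda>x. f x - g x) x"
proof -
  obtain e1 e2 where "e1 > 0" and f: "\<forall>y. \<bar>y - x\<bar> < e1 \<longrightarrow> f y = f x"
    and "e2 > 0" and g: "\<forall>y. \<bar>y - x\<bar> < e2 \<longrightarrow> g y = g x"
    using assms unfolding locally_constant_at_def by blast
  have "f y - g y = f x - g x" if "\<bar>y - x\<bar> < min e1 e2" for y
    using that f[rule_format, of y] g[rule_format, of y] by linarith
  moreover have "min e1 e2 > 0" using \<open>e1 > 0\<close> \<open>e2 > 0\<close> by simp
  ultimately show ?thesis unfolding locally_constant_at_def by blast
qed

lemma has_integral_exp_interval: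
  fixes a b \<beta> d :: real
  assumes "a \<le> b" "\<beta> \<noteq> 0"
  shows "((\<lambda>x. d * exp (- \<beta> * x)) has_integral d * (exp (- \<beta> * a) - exp (- \<beta> * b)) / \<beta>) {a..b}"
proof -
  let ?F = "\<lambda>x. - d * exp (- \<beta> * x) / \<beta>"
  have "((\<lambda>x. d * exp (- \<beta> * x)) has_integral ?F b - ?F a) {a..b}"
  proof (rule fundamental_theorem_of_calculus[OF assms(1)])
    fix x assume "x \<in> {a..b}"
    have "(?F has_real_derivative d * exp (- \<beta> * x)) (at x within {a..b})"
      using assms by (auto intro!: derivative_eq_intros simp: field_simps)
    then show "(?F has_vector_derivative d * exp (- \<beta> * x)) (at x within {a..b})"
      by (simp add: has_real_derivative_iff_has_vector_derivative)
  qed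
  moreover have "?F b - ?F a = d * (exp (- \<beta> * a) - exp (- \<beta> * b)) / \<beta>"
    using assms by (simp add: field_simps)
  ultimately show ?thesis by simp
qed

lemma deriv_zero_if_locally_constant:
  fixes f :: "real \<Rightarrow> real"
  assumes "locally_constant_at f x"
  shows "DERIV f x :> 0"
proof -
  obtain e where e: "e > 0" "\<forall>y. \<bar>y - x\<bar> < e \<longrightarrow> f y = f x"
    using assms unfolding locally_constant_at_def by blast
  have "eventually (\<lambda>y. f y = f x) (nhds x)"
    unfolding eventually_nhds_metric dist_real_def using e by blast
  then have "DERIV f x :> 0 \<longleftrightarrow> DERIV (\<lambda>_. f x) x :> 0"
    by (intro DERIV_cong_ev) auto
  then show ?thesis by simp
qed

lemma piecewise_constant_right_step:
  fixes f :: "real \<Rightarrow> real"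
  assumes pc: "piecewise_constant f" and rc: "continuous (at_right s) f"
  shows "\<exists>e>0. \<forall>y. s \<le> y \<and> y < s + e \<longrightarrow> f y = f s"
proof -
  define jumps where "jumps = {x\<in>{s..s+1}. \<not> locally_constant_at f x}"
  have "finite jumps" using pc unfolding piecewise_constant_iff jumps_def by blast
  define D where "D = insert 1 ((\<lambda>y. y - s) ` {y\<in>jumps. y > s})"
  define e where "e = Min D"
  have fD: "finite D" using \<open>finite jumps\<close> by (simp add: D_def)
  have e0: "0 < e" unfolding e_def using fD by (subst Min_gr_iff) (auto simp: D_def)
  have e1: "e \<le> 1" unfolding e_def using fD by (intro Min_le) (auto simp: D_def)
  have no_jump: "y \<notin> jumps" if "s < y" "y < s + e" for y
  proof
    assume "y \<in> jumps"
    then have "y - s \<in> D" using that by (auto simp: D_def)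
    then have "e \<le> y - s" unfolding e_def using fD by (intro Min_le)
    then show False using that by simp
  qed
  define d where "d = f (s + e / 2)"
  have const: "f y = d" if "s < y" "y < s + e" for y
    unfolding d_def
  proof (rule DERIV_isconst3[of s "s + e" y "s + e / 2" f])
    fix z assume "z \<in> {s<..<s + e}"
    then show "DERIV f z :> 0"
      using no_jump e1 by (intro deriv_zero_if_locally_constant) (auto simp: jumps_def)
  qed (use that e0 in auto)
  have "(f \<longlongrightarrow> d) (at_right s)"
    using e0 const by (intro tendsto_eventually) (auto simp: eventually_at_right_field intro!: exI[of _ "s + e"])
  moreover have "(f \<longlongrightarrow> f s) (at_right s)" using rc by (simp add: continuous_within)
  ultimately have "f s = d" using tendsto_unique[of "at_right s"] by auto
  then show ?thesis using const e0 by (intro exI[of _ e]) (auto simp: le_less)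
qed

lemma laplace_tail_bound:
  fixes f :: "real \<Rightarrow> real"
  assumes bound: "\<And>x. 0 \<le> x \<Longrightarrow> \<bar>f x\<bar> \<le> C * exp (c * x)"
    and "0 \<le> b" "c < \<beta>"
    and int: "(\<lambda>x. exp (- \<beta> * x) * f x) integrable_on {b..}"
  shows "\<bar>integral {b..} (\<lambda>x. exp (- \<beta> * x) * f x)\<bar> \<le> C * (exp (- (\<beta> - c) * b) / (\<beta> - c))"
proof -
  have dom: "((\<lambda>x. C * exp (- (\<beta> - c) * x)) has_integral C * (exp (- (\<beta> - c) * b) / (\<beta> - c))) {b..}"
    using assms by (intro has_integral_mult_right has_integral_exp_minus_to_infinity) auto
  have "norm (integral {b..} (\<lambda>x. exp (- \<beta> * x) * f x)) \<le> integral {b..} (\<lambda>x. C * exp (- (\<beta> - c) * x))"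
  proof (rule integral_norm_bound_integral[OF int])
    show "(\<lambda>x. C * exp (- (\<beta> - c) * x)) integrable_on {b..}" using dom by blast
    fix x assume "x \<in> {b..}"
    then have "0 \<le> x" using \<open>0 \<le> b\<close> by simp
    have "norm (exp (- \<beta> * x) * f x) = exp (- \<beta> * x) * \<bar>f x\<bar>" by (simp add: abs_mult)
    also have "\<dots> \<le> exp (- \<beta> * x) * (C * exp (c * x))" by (intro mult_left_mono bound \<open>0 \<le> x\<close>) auto
    also have "\<dots> = C * exp (- (\<beta> - c) * x)" by (simp add: algebra_simps exp_add[symmetric])
    finally show "norm (exp (- \<beta> * x) * f x) \<le> C * exp (- (\<beta> - c) * x)" .
  qed
  then show ?thesis using integral_unique[OF dom] by simp
qed

text \<open>For a single transform variable beta: if the transform of f vanishes, f vanishes on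
  [0, s) and equals d on [s, s + e), then the contribution of the step equals minus that of
  the tail beyond s + e, which the previous bound controls.\<close>
lemma laplace_first_step_estimate:
  fixes f :: "real \<Rightarrow> real"
  assumes bound: "\<And>x. 0 \<le> x \<Longrightarrow> \<bar>f x\<bar> \<le> C * exp (c * x)" and "0 \<le> c" "c < \<beta>"
    and absint: "(\<lambda>x. exp (- \<beta> * x) * f x) absolutely_integrable_on {0..}"
    and zero: "((\<lambda>x. exp (- \<beta> * x) * f x) has_integral 0) {0..}"
    and "0 \<le> s" "0 < e"
    and vanish: "\<And>y. 0 \<le> y \<Longrightarrow> y < s \<Longrightarrow> f y = 0"
    and step: "\<And>y. s \<le> y \<Longrightarrow> y < s + e \<Longrightarrow> f y = d"
  shows "\<bar>d\<bar> * (exp (- \<beta> * s) - exp (- \<beta> * (s + e))) / \<beta>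
           \<le> C * (exp (- (\<beta> - c) * (s + e)) / (\<beta> - c))"
proof -
  define b where "b = s + e"
  have "0 < \<beta>" using assms by linarith
  let ?g = "\<lambda>x. exp (- \<beta> * x) * f x"
  define J where "J = d * (exp (- \<beta> * s) - exp (- \<beta> * b)) / \<beta>"
  have "(?g has_integral 0) {0..s}"
    by (rule has_integral_spike_finite[where S="{s}" and f="\<lambda>_. 0"]) (auto simp: vanish)
  moreover have "(?g has_integral J) {s..b}"
    unfolding J_def
    by (rule has_integral_spike_finite[where S="{b}", OF _ _ has_integral_exp_interval])
       (use \<open>0 < e\<close> \<open>0 < \<beta>\<close> in \<open>auto simp: b_def step mult.commute\<close>)
  ultimately have "(?g has_integral J) {0..b}"
    using has_integral_combine[of 0 s b] \<open>0 \<le> s\<close> \<open>0 < e\<close> by (fastforce simp: b_def)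
  moreover have tail: "?g integrable_on {b..}"
    by (rule set_lebesgue_integral_eq_integral(1), rule set_integrable_subset[OF absint])
       (use \<open>0 \<le> s\<close> \<open>0 < e\<close> in \<open>auto simp: b_def\<close>)
  ultimately have "(?g has_integral (J + integral {b..} ?g)) ({0..b} \<union> {b..})"
    using \<open>0 \<le> s\<close> \<open>0 < e\<close>
    by (intro has_integral_Un integrable_integral) (auto simp: b_def max_def)
  moreover have "{0..b} \<union> {b..} = {0..}" using \<open>0 \<le> s\<close> \<open>0 < e\<close> by (auto simp: b_def)
  ultimately have "(?g has_integral (J + integral {b..} ?g)) {0..}" by simp
  then have "J + integral {b..} ?g = 0"
    using zero by (simp add: has_integral_unique)
  moreover have "\<bar>integral {b..} ?g\<bar> \<le> C * (exp (- (\<beta> - c) * b) / (\<beta> - c))"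
    using \<open>0 \<le> s\<close> \<open>0 < e\<close> by (intro laplace_tail_bound[OF bound _ \<open>c < \<beta>\<close> tail]) (auto simp: b_def)
  ultimately have "\<bar>J\<bar> \<le> C * (exp (- (\<beta> - c) * b) / (\<beta> - c))" by simp
  moreover have "\<bar>J\<bar> = \<bar>d\<bar> * (exp (- \<beta> * s) - exp (- \<beta> * b)) / \<beta>"
    using \<open>0 < \<beta>\<close> \<open>0 < e\<close> by (simp add: J_def b_def abs_mult)
  ultimately show ?thesis by (simp add: b_def)
qed

text \<open>If the Laplace transform of an exponentially bounded function vanishes for all large
  arguments, and the function vanishes on [0, s) and is constant on [s, s + e), then that
  constant is zero: rescaled by e^(beta s), the step contributes about its value as
  beta tends to infinity, while the tail bound tends to zero.\<close>
lemma laplace_zero_first_step: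
  fixes f :: "real \<Rightarrow> real"
  assumes bound: "\<And>x. 0 \<le> x \<Longrightarrow> \<bar>f x\<bar> \<le> C * exp (c * x)" and "0 \<le> c"
    and absint: "\<And>\<beta>. \<beta> > \<gamma> \<Longrightarrow> (\<lambda>x. exp (- \<beta> * x) * f x) absolutely_integrable_on {0..}"
    and zero: "\<And>\<beta>. \<beta> > \<gamma> \<Longrightarrow> ((\<lambda>x. exp (- \<beta> * x) * f x) has_integral 0) {0..}"
    and "0 \<le> s" "0 < e"
    and vanish: "\<And>y. 0 \<le> y \<Longrightarrow> y < s \<Longrightarrow> f y = 0"
    and step: "\<And>y. s \<le> y \<Longrightarrow> y < s + e \<Longrightarrow> f y = d"
  shows "d = 0"
proof -
  define b where "b = s + e"
  define K where "K = C * exp (c * b)"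
  have ineq: "\<bar>d\<bar> * (1 - exp (- \<beta> * e)) \<le> \<beta> / (\<beta> - c) * K * exp (- \<beta> * e)"
    if \<beta>: "\<beta> > max \<gamma> c" for \<beta>
  proof -
    have "0 < \<beta>" "c < \<beta>" using \<beta> \<open>0 \<le> c\<close> by auto
    have "\<bar>d\<bar> * (exp (- \<beta> * s) - exp (- \<beta> * b)) / \<beta> \<le> C * (exp (- (\<beta> - c) * b) / (\<beta> - c))"
      unfolding b_def using \<beta>
      by (intro laplace_first_step_estimate[OF bound \<open>0 \<le> c\<close> \<open>c < \<beta>\<close> absint zero \<open>0 \<le> s\<close> \<open>0 < e\<close>
            vanish step]) auto
    then have "\<bar>d\<bar> * (exp (- \<beta> * s) - exp (- \<beta> * b)) \<le> \<beta> * (C * (exp (- (\<beta> - c) * b) / (\<beta> - c)))"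
      using \<open>0 < \<beta>\<close> by (simp add: pos_divide_le_eq mult.commute)
    from mult_left_mono[OF this, of "exp (\<beta> * s)"]
    have "\<bar>d\<bar> * (exp (\<beta> * s) * exp (- \<beta> * s) - exp (\<beta> * s) * exp (- \<beta> * b))
        \<le> \<beta> / (\<beta> - c) * C * (exp (\<beta> * s) * exp (- (\<beta> - c) * b))"
      by (simp add: algebra_simps)
    moreover have "exp (\<beta> * s) * exp (- \<beta> * s) = 1" "exp (\<beta> * s) * exp (- \<beta> * b) = exp (- \<beta> * e)"
      "exp (\<beta> * s) * exp (- (\<beta> - c) * b) = exp (c * b) * exp (- \<beta> * e)"
      by (simp_all add: b_def algebra_simps flip: exp_add)
    ultimately show ?thesis by (simp add: K_def mult.assoc)
  qed
  have lhs: "((\<lambda>\<beta>. \<bar>d\<bar> * (1 - exp (- \<beta> * e))) \<longlongrightarrow> \<bar>d\<bar>) at_top"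
    using \<open>0 < e\<close> by real_asymp
  have rhs: "((\<lambda>\<beta>. \<beta> / (\<beta> - c) * K * exp (- \<beta> * e)) \<longlongrightarrow> 0) at_top"
    using \<open>0 < e\<close> by real_asymp
  have "eventually (\<lambda>\<beta>. \<bar>d\<bar> * (1 - exp (- \<beta> * e)) \<le> \<beta> / (\<beta> - c) * K * exp (- \<beta> * e)) at_top"
    using ineq eventually_gt_at_top[of "max \<gamma> c"] by (auto elim: eventually_mono)
  then have "\<bar>d\<bar> \<le> 0" by (rule tendsto_le[OF trivial_limit_at_top_linorder rhs lhs])
  then show ?thesis by simp
qed

lemma exp_order_nonneg_constants:
  assumes "exp_order f"
  obtains C c where "0 \<le> C" "0 \<le> c" "\<And>x. 0 \<le> x \<Longrightarrow> \<bar>f x\<bar> \<le> C * exp (c * x)"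
proof -
  obtain C c where bound: "\<And>x. 0 \<le> x \<Longrightarrow> \<bar>f x\<bar> \<le> C * exp (c * x)"
    using assms unfolding exp_order_def by blast
  have "\<bar>f x\<bar> \<le> C * exp (max c 0 * x)" if "0 \<le> x" for x
  proof -
    have "0 \<le> C" using bound[of 0] by simp
    then have "C * exp (c * x) \<le> C * exp (max c 0 * x)"
      using that by (intro mult_left_mono) (auto intro: mult_right_mono)
    then show ?thesis using bound[OF that] by linarith
  qed
  then show ?thesis using that[of C "max c 0"] bound[of 0] by simp
qed

lemma exp_order_diff:
  assumes "exp_order f" "exp_order g"
  shows "exp_order (\<lambda>x. f x - g x)"
proof -
  obtain C1 c1 where "0 \<le> C1" "0 \<le> c1" and b1: "\<And>x. 0 \<le> x \<Longrightarrow> \<bar>f x\<bar> \<le> C1 * exp (c1 * x)"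
    using exp_order_nonneg_constants[OF assms(1)] by blast
  obtain C2 c2 where "0 \<le> C2" "0 \<le> c2" and b2: "\<And>x. 0 \<le> x \<Longrightarrow> \<bar>g x\<bar> \<le> C2 * exp (c2 * x)"
    using exp_order_nonneg_constants[OF assms(2)] by blast
  have "\<bar>f x - g x\<bar> \<le> (C1 + C2) * exp (max c1 c2 * x)" if "0 \<le> x" for x
  proof -
    have "c1 * x \<le> max c1 c2 * x" "c2 * x \<le> max c1 c2 * x"
      using that by (simp_all add: mult_right_mono)
    then have "exp (c1 * x) \<le> exp (max c1 c2 * x)" "exp (c2 * x) \<le> exp (max c1 c2 * x)"
      by simp_all
    then have "C1 * exp (c1 * x) + C2 * exp (c2 * x) \<le> (C1 + C2) * exp (max c1 c2 * x)"
      using \<open>0 \<le> C1\<close> \<open>0 \<le> C2\<close> by (simp add: distrib_right add_mono mult_left_mono del: exp_le_cancel_iff)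
    then show ?thesis using b1[OF that] b2[OF that] by linarith
  qed
  then show ?thesis unfolding exp_order_def by blast
qed

lemma piecewise_constant_diff:
  assumes "piecewise_constant f" "piecewise_constant g"
  shows "piecewise_constant (\<lambda>x. f x - g x)"
  unfolding piecewise_constant_iff
proof (intro allI)
  fix a b :: real
  have "{x\<in>{a..b}. \<not> locally_constant_at (\<lambda>x. f x - g x) x}
      \<subseteq> {x\<in>{a..b}. \<not> locally_constant_at f x} \<union> {x\<in>{a..b}. \<not> locally_constant_at g x}"
    by (auto dest: locally_constant_at_diff)
  moreover have "finite {x\<in>{a..b}. \<not> locally_constant_at f x}" "finite {x\<in>{a..b}. \<not> locally_constant_at g x}"
    using assms unfolding piecewise_constant_iff by blast+
  ultimately show "finite {x\<in>{a..b}. \<not> locally_constant_at (\<lambda>x. f x - g x) x}"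
    by (meson finite_UnI finite_subset)
qed

text \<open>Otherwise let s be the supremum of the points up to
  which the function vanishes; the function is constant on some [s, s + e), and the previous
  lemma forces this constant to vanish, contradicting the choice of s.\<close>
lemma laplace_unique:
  fixes f :: "real \<Rightarrow> real"
  assumes neg: "\<And>x. x < 0 \<Longrightarrow> f x = 0"
    and rc: "\<And>x. continuous (at_right x) f"
    and pc: "piecewise_constant f" and eo: "exp_order f"
    and absint: "\<And>\<beta>. \<beta> > \<gamma> \<Longrightarrow> (\<lambda>x. exp (- \<beta> * x) * f x) absolutely_integrable_on {0..}"
    and zero: "\<And>\<beta>. \<beta> > \<gamma> \<Longrightarrow> ((\<lambda>x. exp (- \<beta> * x) * f x) has_integral 0) {0..}"
  shows "f x = 0"
proof (rule ccontr)
  assume fx: "f x \<noteq> 0"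
  obtain C c where "0 \<le> c" and bound: "\<And>x. 0 \<le> x \<Longrightarrow> \<bar>f x\<bar> \<le> C * exp (c * x)"
    using exp_order_nonneg_constants[OF eo] by blast
  define A where "A = {t. 0 \<le> t \<and> (\<forall>y<t. f y = 0)}"
  have "0 \<in> A" using neg by (auto simp: A_def)
  have "bdd_above A"
    using fx by (intro bdd_aboveI[of _ x]) (auto simp: A_def not_le[symmetric])
  define s where "s = Sup A"
  have "0 \<le> s" using cSup_upper[OF \<open>0 \<in> A\<close> \<open>bdd_above A\<close>] by (simp add: s_def)
  have below: "f y = 0" if y: "y < s" for y
  proof -
    obtain t where "t \<in> A" "y < t"
      using y less_cSup_iff[of A y] \<open>0 \<in> A\<close> \<open>bdd_above A\<close> by (auto simp: s_def)
    then show ?thesis by (auto simp: A_def)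
  qed
  obtain e where "e > 0" and step: "\<And>y. s \<le> y \<Longrightarrow> y < s + e \<Longrightarrow> f y = f s"
    using piecewise_constant_right_step[OF pc rc] by blast
  have "f s = 0"
    by (rule laplace_zero_first_step[OF bound \<open>0 \<le> c\<close> absint zero \<open>0 \<le> s\<close> \<open>e > 0\<close>])
       (auto intro: below step)
  have "f y = 0" if "y < s + e" for y
  proof (cases "y < s")
    case True
    then show ?thesis by (rule below)
  next
    case False
    then show ?thesis using step[of y] that \<open>f s = 0\<close> by simp
  qed
  then have "s + e \<in> A" using \<open>0 \<le> s\<close> \<open>e > 0\<close> by (simp add: A_def)
  then have "s + e \<le> s" unfolding s_def by (rule cSup_upper[OF _ \<open>bdd_above A\<close>])
  then show False using \<open>e > 0\<close> by simp
qed

lemma has_integral_unit_intervals: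
  fixes g :: "real \<Rightarrow> real"
  assumes "\<And>m. (g has_integral I m) {real m..real m + 1}"
  shows "(g has_integral (\<Sum>m<N. I m)) {0..real N}"
proof (induction N)
  case 0
  then show ?case using has_integral_refl(2)[of g 0] by simp
next
  case (Suc N)
  have "(g has_integral (\<Sum>m<N. I m) + I N) {0..real N + 1}"
    by (rule has_integral_combine[OF _ _ Suc.IH assms]) auto
  then show ?case by (simp add: add.commute)
qed

definition step_fun :: "(nat \<Rightarrow> real) \<Rightarrow> real \<Rightarrow> real" where
  "step_fun w x = (if x < 0 then 0 else w (nat \<lfloor>x\<rfloor>))"

lemma step_fun_neg: "x < 0 \<Longrightarrow> step_fun w x = 0"
  by (simp add: step_fun_def)

lemma step_fun_nat: "step_fun w (real n) = w n"
  by (simp add: step_fun_def)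

lemma step_fun_on_interval:
  assumes "real m \<le> x" "x < real m + 1"
  shows "step_fun w x = w m"
proof -
  have "\<lfloor>x\<rfloor> = int m" using assms by (simp add: floor_eq_iff)
  then show ?thesis using assms by (simp add: step_fun_def)
qed

lemma step_fun_right_continuous: "continuous (at_right x) (step_fun w)"
proof -
  have "\<forall>\<^sub>F y in at_right x. step_fun w y = step_fun w x"
  proof (cases "x < 0")
    case True
    then show ?thesis unfolding eventually_at_right_field
      by (intro exI[of _ 0]) (auto simp: step_fun_neg)
  next
    case False
    define m where "m = nat \<lfloor>x\<rfloor>"
    have "real m \<le> x" "x < real m + 1" using False by (auto simp: m_def)
    then show ?thesis unfolding eventually_at_right_field
      by (intro exI[of _ "real m + 1"]) (auto simp: step_fun_on_interval)
  qed
  then show ?thesis unfolding continuous_within by (rule tendsto_eventually)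
qed

lemma step_fun_locally_constant:
  assumes "x \<notin> \<int>"
  shows "locally_constant_at (step_fun w) x"
proof -
  have "of_int \<lfloor>x\<rfloor> \<noteq> x" using assms by (metis Ints_of_int)
  then have lo: "of_int \<lfloor>x\<rfloor> < x" using of_int_floor_le[of x] by linarith
  define e where "e = min (x - of_int \<lfloor>x\<rfloor>) (of_int \<lfloor>x\<rfloor> + 1 - x)"
  have "step_fun w y = step_fun w x" if "\<bar>y - x\<bar> < e" for y
  proof -
    have "of_int \<lfloor>x\<rfloor> < y" "y < of_int \<lfloor>x\<rfloor> + 1" using that by (auto simp: e_def)
    then have "\<lfloor>y\<rfloor> = \<lfloor>x\<rfloor>" by (simp add: floor_eq_iff)
    then have "y < 0 \<longleftrightarrow> x < 0" by (metis floor_less_zero)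
    with \<open>\<lfloor>y\<rfloor> = \<lfloor>x\<rfloor>\<close> show ?thesis by (simp add: step_fun_def)
  qed
  moreover have "e > 0" using lo by (simp add: e_def)
  ultimately show ?thesis unfolding locally_constant_at_def by blast
qed

lemma step_fun_piecewise_constant: "piecewise_constant (step_fun w)"
  unfolding piecewise_constant_iff
proof (intro allI)
  fix a b :: real
  have "{x\<in>{a..b}. \<not> locally_constant_at (step_fun w) x} \<subseteq> of_int ` {\<lceil>a\<rceil>..\<lfloor>b\<rfloor>}"
  proof
    fix x assume x: "x \<in> {x\<in>{a..b}. \<not> locally_constant_at (step_fun w) x}"
    then obtain k where "x = of_int k" using step_fun_locally_constant by (blast elim: Ints_cases)
    then show "x \<in> of_int ` {\<lceil>a\<rceil>..\<lfloor>b\<rfloor>}" using x by (auto simp: ceiling_le_iff le_floor_iff)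
  qed
  then show "finite {x\<in>{a..b}. \<not> locally_constant_at (step_fun w) x}"
    by (rule finite_subset) simp
qed

lemma step_fun_exp_order:
  assumes bound: "\<And>n. \<bar>w n\<bar> \<le> C * M ^ n" and "1 \<le> M"
  shows "exp_order (step_fun w)"
  unfolding exp_order_def
proof (intro exI allI impI)
  fix x :: real assume "0 \<le> x"
  define n where "n = nat \<lfloor>x\<rfloor>"
  have "real n \<le> x" using \<open>0 \<le> x\<close> by (simp add: n_def)
  have "0 \<le> C" using bound[of 0] by simp
  have "M ^ n = exp (real n * ln M)" using \<open>1 \<le> M\<close> by (simp add: exp_of_nat_mult)
  also have "\<dots> \<le> exp (ln M * x)"
    using \<open>1 \<le> M\<close> \<open>real n \<le> x\<close> by (simp add: mult.commute mult_right_mono)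
  finally have "C * M ^ n \<le> C * exp (ln M * x)" using \<open>0 \<le> C\<close> by (rule mult_left_mono)
  moreover have "step_fun w x = w n" using \<open>0 \<le> x\<close> by (simp add: step_fun_def n_def)
  ultimately show "\<bar>step_fun w x\<bar> \<le> C * exp (ln M * x)" using bound[of n] by simp
qed

lemma step_fun_integral: "(step_fun w has_integral (\<Sum>m<N. w m)) {0..real N}"
proof (rule has_integral_unit_intervals)
  fix m
  have "((\<lambda>x. w m) has_integral w m) {real m..real m + 1}"
    using has_integral_const_real[of "w m" "real m" "real m + 1"] by simp
  then show "(step_fun w has_integral w m) {real m..real m + 1}"
    by (rule has_integral_spike_finite[where S="{real m + 1}", rotated 2])
       (auto simp: step_fun_on_interval)
qed

lemma step_fun_laplace_partial:
  assumes "\<beta> \<noteq> 0"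
  shows "((\<lambda>x. exp (- \<beta> * x) * step_fun w x) has_integral
           (1 - exp (- \<beta>)) / \<beta> * (\<Sum>m<N. w m * exp (- \<beta>) ^ m)) {0..real N}"
proof -
  have "((\<lambda>x. exp (- \<beta> * x) * step_fun w x) has_integral
          (1 - exp (- \<beta>)) / \<beta> * (w m * exp (- \<beta>) ^ m)) {real m..real m + 1}" for m
  proof -
    have "exp (- \<beta> * real k) = exp (- \<beta>) ^ k" for k
      by (simp add: mult.commute flip: exp_of_nat_mult)
    from this[of m] this[of "Suc m"]
    have val: "w m * (exp (- \<beta> * real m) - exp (- \<beta> * (real m + 1))) / \<beta>
        = (1 - exp (- \<beta>)) / \<beta> * (w m * exp (- \<beta>) ^ m)" by (simp add: algebra_simps)
    have "((\<lambda>x. w m * exp (- \<beta> * x)) has_integral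
        w m * (exp (- \<beta> * real m) - exp (- \<beta> * (real m + 1))) / \<beta>) {real m..real m + 1}"
      using assms by (intro has_integral_exp_interval) auto
    then have "((\<lambda>x. w m * exp (- \<beta> * x)) has_integral
        (1 - exp (- \<beta>)) / \<beta> * (w m * exp (- \<beta>) ^ m)) {real m..real m + 1}" by (simp only: val)
    then show ?thesis
      by (rule has_integral_spike_finite[where S="{real m + 1}", rotated 2])
         (simp_all add: step_fun_on_interval)
  qed
  then show ?thesis
    by (subst sum_distrib_left) (rule has_integral_unit_intervals)
qed

lemma step_fun_laplace:
  assumes nonneg: "\<And>n. 0 \<le> w n" and "0 < \<beta>"
    and gen: "(\<lambda>n. w n * exp (- \<beta>) ^ n) sums S"
  shows "((\<lambda>x. exp (- \<beta> * x) * step_fun w x) has_integral (1 - exp (- \<beta>)) / \<beta> * S) {0..}"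
proof -
  define g where "g x = exp (- \<beta> * x) * step_fun w x" for x
  define h where "h N x = (if x < real N then g x else 0)" for N x
  define I where "I N = (1 - exp (- \<beta>)) / \<beta> * (\<Sum>m<N. w m * exp (- \<beta>) ^ m)" for N
  have hI: "(h N has_integral I N) {0..}" for N
  proof -
    have "(g has_integral I N) {0..real N}"
      unfolding g_def I_def using \<open>0 < \<beta>\<close> by (intro step_fun_laplace_partial) simp
    then have "(h N has_integral I N) {0..real N}"
      by (rule has_integral_spike_finite[where S="{real N}", rotated 2]) (auto simp: h_def)
    then show ?thesis
      by (rule has_integral_on_superset) (auto simp: h_def g_def step_fun_neg)
  qed
  have step_nonneg: "0 \<le> step_fun w x" for x by (simp add: step_fun_def nonneg)
  have mono: "h N x \<le> h (Suc N) x" if "x \<in> {0..}" for N x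
    using step_nonneg[of x] by (auto simp: h_def g_def)
  have lim: "(\<lambda>N. h N x) \<longlonglongrightarrow> g x" for x
  proof (rule tendsto_eventually)
    show "\<forall>\<^sub>F N in sequentially. h N x = g x"
      unfolding eventually_sequentially
      by (rule exI[of _ "nat \<lceil>x\<rceil> + 1"]) (auto simp: h_def, linarith)
  qed
  have Ilim: "I \<longlonglongrightarrow> (1 - exp (- \<beta>)) / \<beta> * S"
    unfolding I_def using gen by (intro tendsto_mult tendsto_const) (simp add: sums_def)
  have intI: "integral {0..} (h N) = I N" for N using hI by blast
  have "bounded (range (\<lambda>N. integral {0..} (h N)))"
    unfolding intI using Ilim by (intro convergent_imp_bounded) (auto simp: convergent_def)
  then have "g integrable_on {0..} \<and> (\<lambda>N. integral {0..} (h N)) \<longlonglongrightarrow> integral {0..} g"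
    using hI mono lim by (intro monotone_convergence_increasing) auto
  then have "(g has_integral integral {0..} g) {0..}" "I \<longlonglongrightarrow> integral {0..} g"
    by (auto simp: intI)
  with Ilim show ?thesis unfolding g_def[abs_def] using LIMSEQ_unique by metis
qed

function renewal :: "real \<Rightarrow> (nat \<Rightarrow> real) \<Rightarrow> nat \<Rightarrow> real" where
  "renewal b c n = b + (\<Sum>i<n. renewal b c i * c (n - i))"
  by auto
termination by (relation "Wellfounded.measure (\<lambda>(_, _, n). n)") auto

declare renewal.simps [simp del]

text \<open>The recursion with the summation index reversed, as in the statement of the corollary.\<close>
lemma renewal_rec_reversed: "renewal b c n = b + (\<Sum>k=1..n. renewal b c (n - k) * c k)"
proof -
  have "(\<Sum>k=1..n. renewal b c (n - k) * c k) = (\<Sum>i<n. renewal b c i * c (n - i))"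
    by (rule sum.reindex_bij_witness[of _ "\<lambda>i. n - i" "\<lambda>k. n - k"]) auto
  then show ?thesis by (subst renewal.simps) simp
qed

lemma renewal_ge:
  assumes "0 \<le> b" "\<And>k. 0 \<le> c k"
  shows "b \<le> renewal b c n"
proof (induction n rule: less_induct)
  case (less n)
  have "0 \<le> (\<Sum>i<n. renewal b c i * c (n - i))"
    using less assms by (intro sum_nonneg mult_nonneg_nonneg) force+
  then show ?case by (subst renewal.simps) simp
qed

lemma renewal_geometric_bound:
  assumes "0 \<le> b" "\<And>k. 0 \<le> c k" "\<And>k. c k \<le> M"
  shows "renewal b c n \<le> b * (1 + M) ^ n"
proof (induction n rule: less_induct)
  case (less n)
  have "0 \<le> M" using assms(2,3) order_trans by blast
  have "(\<Sum>i<n. renewal b c i * c (n - i)) \<le> (\<Sum>i<n. b * (1 + M) ^ i * M)"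
    using less assms \<open>0 \<le> M\<close> by (intro sum_mono mult_mono) auto
  also have "\<dots> = b * (M * (\<Sum>i<n. (1 + M) ^ i))"
    by (simp add: sum_distrib_left sum_distrib_right algebra_simps)
  also have "M * (\<Sum>i<n. (1 + M) ^ i) = (1 + M) ^ n - 1"
    by (induction n) (auto simp: algebra_simps)
  finally show ?case by (subst renewal.simps) (simp add: algebra_simps)
qed

lemma renewal_partial_sums:
  "(\<Sum>i<Suc n. renewal b c i) = real (Suc n) * b + (\<Sum>k=1..n. (\<Sum>i<Suc n - k. renewal b c i) * c k)"
proof (induction n)
  case 0
  then show ?case by (simp add: renewal.simps[of b c 0])
next
  case (Suc n)
  let ?u = "renewal b c"
  have "(\<Sum>i<Suc (Suc n) - k. ?u i) = (\<Sum>i<Suc n - k. ?u i) + ?u (Suc n - k)" if "k \<in> {1..Suc n}" for k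
  proof -
    have "Suc (Suc n) - k = Suc (Suc n - k)" using that by auto
    then show ?thesis by simp
  qed
  then have "(\<Sum>k=1..Suc n. (\<Sum>i<Suc (Suc n) - k. ?u i) * c k)
      = (\<Sum>k=1..n. (\<Sum>i<Suc n - k. ?u i) * c k) + (\<Sum>k=1..Suc n. ?u (Suc n - k) * c k)"
    by (simp add: sum.distrib[symmetric] distrib_right)
  moreover have "(\<Sum>i<Suc (Suc n). ?u i) = (\<Sum>i<Suc n. ?u i) + ?u (Suc n)" by simp
  ultimately show ?case
    using Suc.IH renewal_rec_reversed[of b c "Suc n"] by (simp add: algebra_simps)
qed

lemma convolution_partial_sum_le:
  fixes F G :: "nat \<Rightarrow> real"
  assumes F: "\<And>i. 0 \<le> F i" and G: "\<And>k. 0 \<le> G k" and "G sums C"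
  shows "(\<Sum>n<N. \<Sum>i<n. F i * G (n - i)) \<le> (\<Sum>i<N. F i) * C"
proof -
  have inner: "(\<Sum>n\<in>{Suc i..N}. G (n - i)) \<le> C" for i
  proof -
    have "(\<Sum>n\<in>{Suc i..N}. G (n - i)) = sum G ((\<lambda>n. n - i) ` {Suc i..N})"
      by (subst sum.reindex) (auto simp: inj_on_def)
    also have "\<dots> \<le> C"
      using \<open>G sums C\<close> G by (auto simp: sums_iff intro!: sum_le_suminf)
    finally show ?thesis .
  qed
  have "(\<Sum>n<N. \<Sum>i<n. F i * G (n - i)) \<le> (\<Sum>n\<le>N. \<Sum>i<n. F i * G (n - i))"
    using F G by (intro sum_mono2 sum_nonneg mult_nonneg_nonneg) auto
  also have "\<dots> = (\<Sum>i<N. \<Sum>n\<in>{Suc i..N}. F i * G (n - i))"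
    by (rule sum.nested_swap')
  also have "\<dots> = (\<Sum>i<N. F i * (\<Sum>n\<in>{Suc i..N}. G (n - i)))"
    by (simp add: sum_distrib_left)
  also have "\<dots> \<le> (\<Sum>i<N. F i * C)"
    by (intro sum_mono mult_left_mono inner F)
  finally show ?thesis by (simp add: sum_distrib_right)
qed

lemma renewal_weighted:
  "renewal b c n * z ^ n
     = b * z ^ n + (\<Sum>i<n. (renewal b c i * z ^ i) * (if n - i = 0 then 0 else c (n - i) * z ^ (n - i)))"
proof -
  have "renewal b c n * z ^ n = b * z ^ n + (\<Sum>i<n. renewal b c i * c (n - i) * z ^ n)"
    by (subst renewal.simps) (simp add: distrib_right sum_distrib_right)
  also have "(\<Sum>i<n. renewal b c i * c (n - i) * z ^ n)
      = (\<Sum>i<n. (renewal b c i * z ^ i) * (if n - i = 0 then 0 else c (n - i) * z ^ (n - i)))"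
  proof (rule sum.cong[OF refl])
    fix i assume "i \<in> {..<n}"
    then have "z ^ n = z ^ i * z ^ (n - i)" by (simp flip: power_add)
    then show "renewal b c i * c (n - i) * z ^ n
        = (renewal b c i * z ^ i) * (if n - i = 0 then 0 else c (n - i) * z ^ (n - i))"
      using \<open>i \<in> {..<n}\<close> by simp
  qed
  finally show ?thesis .
qed

text \<open>Generating function of a renewal sequence: with C the generating function of the
  coefficients, sum of u n z^n = b / ((1 - z) (1 - C)) whenever C < 1.  The partial sums
  are bounded directly from the recursion, which gives convergence, and the value then
  follows from the Cauchy product of the two series.\<close>
lemma renewal_generating_function:
  assumes "0 \<le> b" and c_nonneg: "\<And>k. 0 \<le> c k" and "0 < z" "z < 1"
    and C: "(\<lambda>k. c (Suc k) * z ^ Suc k) sums C" and "C < 1"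
  shows "(\<lambda>n. renewal b c n * z ^ n) sums (b / ((1 - z) * (1 - C)))"
proof -
  define F where "F n = renewal b c n * z ^ n" for n
  define G where "G k = (if k = 0 then 0 else c k * z ^ k)" for k
  have F_nonneg: "0 \<le> F n" for n
    unfolding F_def using renewal_ge[OF \<open>0 \<le> b\<close> c_nonneg] \<open>0 \<le> b\<close> \<open>0 < z\<close> by (meson order_trans zero_le_power less_imp_le mult_nonneg_nonneg)
  have G_nonneg: "0 \<le> G k" for k using c_nonneg \<open>0 < z\<close> by (simp add: G_def)
  have "(\<lambda>k. G (Suc k)) sums C" using C by (simp add: G_def)
  then have "G sums (C + G 0)" by (simp only: sums_Suc_iff)
  then have G: "G sums C" by (simp add: G_def)
  have F_rec: "F n = b * z ^ n + (\<Sum>i<n. F i * G (n - i))" for n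
    unfolding F_def G_def by (rule renewal_weighted)
  have geo: "(\<lambda>n. b * z ^ n) sums (b / (1 - z))"
    using sums_mult[OF geometric_sums[of z], of b] \<open>0 < z\<close> \<open>z < 1\<close> by simp
  have "summable F"
  proof (rule summableI_nonneg_bounded[OF F_nonneg])
    fix N
    have conv: "(\<Sum>n<N. \<Sum>i<n. F i * G (n - i)) \<le> (\<Sum>i<N. F i) * C"
      by (rule convolution_partial_sum_le[OF F_nonneg G_nonneg G])
    have "(\<Sum>n<N. F n) = (\<Sum>n<N. b * z ^ n) + (\<Sum>n<N. \<Sum>i<n. F i * G (n - i))"
      by (subst F_rec) (simp add: sum.distrib)
    also have "(\<Sum>n<N. b * z ^ n) \<le> b / (1 - z)"
      using sum_le_suminf[OF sums_summable[OF geo], of "{..<N}"] sums_unique[OF geo] \<open>0 \<le> b\<close> \<open>0 < z\<close>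
      by simp
    finally have "(\<Sum>n<N. F n) * (1 - C) \<le> b / (1 - z)" using conv by (simp add: algebra_simps)
    then have "(\<Sum>n<N. F n) \<le> b / (1 - z) / (1 - C)"
      using \<open>C < 1\<close> by (subst pos_le_divide_eq) auto
    then show "(\<Sum>n<N. F n) \<le> b / ((1 - z) * (1 - C))" by simp
  qed
  have "(\<lambda>n. \<Sum>i\<le>n. F i * G (n - i)) sums (suminf F * suminf G)"
    using \<open>summable F\<close> sums_summable[OF G] F_nonneg G_nonneg by (intro Cauchy_product_sums) simp_all
  moreover have "(\<Sum>i\<le>n. F i * G (n - i)) = F n - b * z ^ n" for n
    using F_rec[of n] by (simp add: lessThan_Suc_atMost[symmetric] G_def)
  ultimately have "(\<lambda>n. (F n - b * z ^ n) + b * z ^ n) sums (suminf F * C + b / (1 - z))"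
    using geo sums_unique[OF G] by (intro sums_add) simp_all
  then have "suminf F = suminf F * C + b / (1 - z)" by (simp add: sums_iff)
  then have "suminf F * (1 - C) = b / (1 - z)" by (simp add: algebra_simps)
  then have "suminf F * ((1 - z) * (1 - C)) = b"
    using \<open>z < 1\<close> by (simp add: field_simps)
  moreover have "(1 - z) * (1 - C) \<noteq> 0" using \<open>C < 1\<close> \<open>z < 1\<close> by simp
  ultimately have "suminf F = b / ((1 - z) * (1 - C))" by (simp add: nonzero_eq_divide_eq)
  then show ?thesis using summable_sums[OF \<open>summable F\<close>] unfolding F_def by simp
qed

lemma has_sum_nonpositive_support:
  fixes h :: "int \<Rightarrow> real"
  assumes "\<And>k. k > 0 \<Longrightarrow> h k = 0" "summable (\<lambda>j. \<bar>h (- int j)\<bar>)" "(\<lambda>j. h (- int j)) sums s"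
  shows "(h has_sum s) UNIV"
proof -
  have "((\<lambda>j. h (- int j)) has_sum s) UNIV"
    using norm_summable_imp_has_sum[of "\<lambda>j. h (- int j)"] assms(2,3) by simp
  then have "(h has_sum s) (range (\<lambda>j::nat. - int j))"
    by (subst has_sum_reindex) (auto simp: inj_on_def o_def)
  moreover have "h x = 0" if "x \<notin> range (\<lambda>j::nat. - int j)" for x
  proof -
    have "x > 0"
    proof (rule ccontr)
      assume "\<not> x > 0"
      then have "x = - int (nat (- x))" by simp
      with that show False by blast
    qed
    then show ?thesis by (rule assms(1))
  qed
  ultimately show ?thesis by (subst has_sum_cong_neutral[where T="range (\<lambda>j::nat. - int j)" and g=h]) auto
qed

text \<open>The scale function is determined by its defining properties: the difference of two
  candidates satisfies the hypotheses of the uniqueness theorem for Laplace transforms;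
  absolute integrability of the transforms follows from nonnegativity.\<close>
lemma is_scale_W_unique:
  assumes V: "is_scale_W nu q V" and W: "is_scale_W nu q W"
  shows "V = W"
proof -
  define f where "f x = V x - W x" for x
  have "f x = 0" for x
  proof (rule laplace_unique[where \<gamma> = "Phi nu q" and f = f])
    show "f x = 0" if "x < 0" for x using V W that by (simp add: f_def is_scale_W_def)
    show "continuous (at_right x) f" for x
      using V W unfolding f_def[abs_def] is_scale_W_def by (intro continuous_diff) auto
    show "piecewise_constant f"
      using V W unfolding f_def[abs_def] is_scale_W_def by (intro piecewise_constant_diff) auto
    show "exp_order f"
      using V W unfolding f_def[abs_def] is_scale_W_def by (intro exp_order_diff) auto
    fix \<beta> :: real assume "\<beta> > Phi nu q"
    then have iV: "((\<lambda>x. exp (- \<beta> * x) * V x) has_integral ((exp \<beta> - 1) / (\<beta> * (laplace_exp nu \<beta> - q)))) {0..}"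
      and iW: "((\<lambda>x. exp (- \<beta> * x) * W x) has_integral ((exp \<beta> - 1) / (\<beta> * (laplace_exp nu \<beta> - q)))) {0..}"
      using V W by (auto simp: is_scale_W_def)
    have fe: "(\<lambda>x. exp (- \<beta> * x) * f x) = (\<lambda>x. exp (- \<beta> * x) * V x - exp (- \<beta> * x) * W x)"
      by (simp add: f_def right_diff_distrib)
    show "((\<lambda>x. exp (- \<beta> * x) * f x) has_integral 0) {0..}"
      unfolding fe using has_integral_diff[OF iV iW] by simp
    have "(\<lambda>x. exp (- \<beta> * x) * V x) absolutely_integrable_on {0..}"
      using iV V by (intro nonnegative_absolutely_integrable_1) (auto simp: is_scale_W_def)
    moreover have "(\<lambda>x. exp (- \<beta> * x) * W x) absolutely_integrable_on {0..}"
      using iW W by (intro nonnegative_absolutely_integrable_1) (auto simp: is_scale_W_def)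
    ultimately show "(\<lambda>x. exp (- \<beta> * x) * f x) absolutely_integrable_on {0..}"
      unfolding fe by (rule set_integral_diff(1))
  qed
  then show ?thesis by (auto simp: f_def)
qed

locale skip_free_chain =
  fixes nu :: "int \<Rightarrow> real" and q :: real
  assumes levy: "skip_free_levy_measure nu" and q_nonneg: "0 \<le> q"
begin

lemma nu_nonneg: "0 \<le> nu k" using levy by (auto simp: skip_free_levy_measure_def)
lemma nu_ge2: "k \<ge> 2 \<Longrightarrow> nu k = 0" using levy by (auto simp: skip_free_levy_measure_def)
lemma nu_one_pos: "0 < nu 1" using levy by (auto simp: skip_free_levy_measure_def)

definition down :: "nat \<Rightarrow> real" where "down j = nu (- int j)"
definition down_total :: real where "down_total = suminf down"
definition down_tail :: "nat \<Rightarrow> real" where "down_tail k = (\<Sum>j. down (j + k))"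

lemma down_nonneg: "0 \<le> down j" by (simp add: down_def nu_nonneg)

lemma summable_down: "summable down"
proof -
  have "nu summable_on UNIV" using levy by (simp add: skip_free_levy_measure_def)
  then have "nu summable_on range (\<lambda>j::nat. - int j)" by (rule summable_on_subset_banach) auto
  then have "(nu \<circ> (\<lambda>j::nat. - int j)) summable_on UNIV"
    by (subst summable_on_reindex[symmetric]) (auto simp: inj_on_def)
  then show ?thesis by (auto dest!: summable_on_imp_summable simp: down_def[abs_def] o_def)
qed

lemma down_tail_sums: "(\<lambda>j. down (j + k)) sums down_tail k"
  unfolding down_tail_def by (rule summable_sums) (simp add: summable_down)

lemma tail_eq_down_tail: "tail nu k = down_tail k"
proof -
  have "((\<lambda>j. down (j + k)) has_sum down_tail k) UNIV"
    using norm_summable_imp_has_sum[OF _ down_tail_sums] summable_down down_nonneg by simp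
  then have "((nu \<circ> (\<lambda>j::nat. - int (j + k))) has_sum down_tail k) UNIV" by (simp add: down_def o_def)
  then have "(nu has_sum down_tail k) (range (\<lambda>j::nat. - int (j + k)))"
    by (subst has_sum_reindex) (auto simp: inj_on_def)
  moreover have "range (\<lambda>j::nat. - int (j + k)) = {..- int k}"
  proof safe
    fix x :: int assume "x \<le> - int k"
    then show "x \<in> range (\<lambda>j::nat. - int (j + k))" by (intro image_eqI[of _ _ "nat (- x) - k"]) auto
  qed auto
  ultimately show ?thesis unfolding tail_def by (simp add: infsumI)
qed

lemma down_tail_Suc: "down_tail k = down_tail (Suc k) + down k"
proof -
  have "(\<lambda>j. down (Suc j + k)) sums down_tail (Suc k)" using down_tail_sums[of "Suc k"] by simp
  then have "(\<lambda>j. down (j + k)) sums (down_tail (Suc k) + down k)" by (subst (asm) sums_Suc_iff) simp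
  then show ?thesis using down_tail_sums sums_unique2 by blast
qed

lemma down_tail_0: "down_tail 0 = down_total" by (simp add: down_tail_def down_total_def)

lemma down_tail_nonneg: "0 \<le> down_tail k"
  unfolding down_tail_def by (rule suminf_nonneg) (auto simp: summable_down down_nonneg)

lemma down_tail_le: "down_tail k \<le> down_total"
proof (induction k)
  case 0 then show ?case by (simp add: down_tail_0)
next
  case (Suc k) then show ?case using down_tail_Suc[of k] down_nonneg[of k] by simp
qed

lemma down_total_nonneg: "0 \<le> down_total" using down_tail_nonneg[of 0] by (simp add: down_tail_0)

definition down_gen :: "real \<Rightarrow> real" where "down_gen z = (\<Sum>j. down j * z ^ j)"

lemma summable_down_gen: "0 \<le> z \<Longrightarrow> z \<le> 1 \<Longrightarrow> summable (\<lambda>j. down j * z ^ j)"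
  by (rule summable_comparison_test'[OF summable_down, of 0])
     (auto simp: down_nonneg mult_left_le power_le_one)

lemma down_gen_nonneg: "0 \<le> z \<Longrightarrow> z \<le> 1 \<Longrightarrow> 0 \<le> down_gen z"
  unfolding down_gen_def by (rule suminf_nonneg[OF summable_down_gen]) (auto simp: down_nonneg)

lemma continuous_on_down_gen: "continuous_on {0..1} down_gen"
proof (rule uniform_limit_theorem)
  show "\<forall>\<^sub>F n in sequentially. continuous_on {0..1} (\<lambda>x. \<Sum>i<n. down i * x ^ i)"
    by (intro always_eventually allI continuous_intros)
  show "uniform_limit {0..1} (\<lambda>n x. \<Sum>i<n. down i * x ^ i) down_gen sequentially"
    unfolding down_gen_def[abs_def]
    by (rule Weierstrass_m_test[OF _ summable_down]) (auto simp: down_nonneg mult_left_le power_le_one)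
qed auto

lemma laplace_exp_eq:
  assumes "0 \<le> \<beta>"
  shows "laplace_exp nu \<beta> = nu 1 * (exp \<beta> - 1) + down_gen (exp (- \<beta>)) - down_total"
proof -
  define z where "z = exp (- \<beta>)"
  have z: "0 < z" "z \<le> 1" using assms by (auto simp: z_def)
  let ?h = "\<lambda>k::int. (exp (\<beta> * of_int k) - 1) * nu k"
  let ?up = "\<lambda>k::int. if k = 1 then (exp \<beta> - 1) * nu 1 else 0"
  let ?dn = "\<lambda>k::int. if k \<le> 0 then ?h k else 0"
  have "?h k = ?up k + ?dn k" for k using nu_ge2[of k] by auto
  then have split: "?h = (\<lambda>k. ?up k + ?dn k)" by (rule ext)
  have up: "(?up has_sum ((exp \<beta> - 1) * nu 1)) UNIV"
    using has_sum_finite[of "{1::int}" ?up]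
    by (subst has_sum_cong_neutral[where T="{1}" and g="?up"]) auto
  have dn_eq: "?dn (- int j) = down j * z ^ j - down j" for j
  proof -
    have "exp (\<beta> * of_int (- int j)) = z ^ j"
      unfolding z_def by (simp add: mult.commute flip: exp_of_nat_mult)
    then show ?thesis by (simp add: down_def algebra_simps)
  qed
  have "\<bar>down j * z ^ j - down j\<bar> \<le> down j" for j
    using z down_nonneg[of j] mult_left_le[of "z ^ j" "down j"] power_le_one[of z j] by simp
  then have "summable (\<lambda>j. \<bar>?dn (- int j)\<bar>)"
    unfolding dn_eq by (intro summable_comparison_test'[OF summable_down, of 0]) auto
  moreover have "(\<lambda>j. ?dn (- int j)) sums (down_gen z - down_total)"
    unfolding dn_eq down_gen_def down_total_def
    by (intro sums_diff summable_sums summable_down_gen summable_down) (use z in auto)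
  ultimately have dn: "(?dn has_sum (down_gen z - down_total)) UNIV"
    by (intro has_sum_nonpositive_support) auto
  have "(?h has_sum ((exp \<beta> - 1) * nu 1 + (down_gen z - down_total))) UNIV"
    unfolding split by (rule has_sum_add[OF up dn])
  then show ?thesis unfolding laplace_exp_def z_def by (simp add: infsumI mult.commute)
qed

definition lexp :: "real \<Rightarrow> real" where
  "lexp \<beta> = nu 1 * (exp \<beta> - 1) + down_gen (exp (- \<beta>)) - down_total"

lemma continuous_on_lexp: "continuous_on {0..} lexp"
proof -
  have "continuous_on {0..} (\<lambda>\<beta>. down_gen (exp (- \<beta>)))"
    by (rule continuous_on_compose2[OF continuous_on_down_gen]) (auto intro!: continuous_intros)
  then show ?thesis unfolding lexp_def by (intro continuous_intros)
qed

lemma lexp_0: "lexp 0 = 0" unfolding lexp_def down_gen_def down_total_def by simp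

text \<open>An explicit bound beyond which the Laplace exponent exceeds q.\<close>
definition root_bound :: real where "root_bound = ln (2 + (q + down_total) / nu 1)"

lemma root_bound_pos: "0 < root_bound"
proof -
  have "0 \<le> (q + down_total) / nu 1" using q_nonneg down_total_nonneg nu_one_pos by simp
  then show ?thesis unfolding root_bound_def by (intro ln_gt_zero) linarith
qed

lemma lexp_gt_q:
  assumes "root_bound \<le> \<beta>"
  shows "q < lexp \<beta>"
proof -
  have "0 \<le> (q + down_total) / nu 1" using q_nonneg down_total_nonneg nu_one_pos by simp
  then have "2 + (q + down_total) / nu 1 \<le> exp \<beta>"
    using assms unfolding root_bound_def by (metis exp_ln exp_le_cancel_iff add_pos_nonneg zero_less_numeral)
  then have "nu 1 * (2 + (q + down_total) / nu 1) \<le> nu 1 * exp \<beta>" using nu_one_pos by simp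
  moreover have "nu 1 * (2 + (q + down_total) / nu 1) = 2 * nu 1 + q + down_total"
    using nu_one_pos by (simp add: field_simps)
  ultimately have "2 * nu 1 + q + down_total \<le> nu 1 * exp \<beta>" by simp
  moreover have "0 \<le> down_gen (exp (- \<beta>))"
    using assms root_bound_pos by (intro down_gen_nonneg) auto
  ultimately show ?thesis using nu_one_pos unfolding lexp_def by (simp add: algebra_simps)
qed

definition roots :: "real set" where "roots = {\<beta>. 0 \<le> \<beta> \<and> laplace_exp nu \<beta> = q}"

lemma roots_eq: "roots = {\<beta>. 0 \<le> \<beta> \<and> lexp \<beta> = q}"
  unfolding roots_def lexp_def using laplace_exp_eq by auto

lemma roots_bdd_above: "bdd_above roots"
proof (rule bdd_aboveI)
  fix x assume "x \<in> roots"
  then have "lexp x = q" unfolding roots_eq by simp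
  then show "x \<le> root_bound" using lexp_gt_q[of x] by linarith
qed

text \<open>By the intermediate value theorem, there is a root beyond every point where the
  Laplace exponent does not exceed q.\<close>
lemma root_beyond:
  assumes "0 \<le> x" "lexp x \<le> q"
  shows "\<exists>r\<ge>x. r \<in> roots"
proof -
  define B where "B = max x root_bound"
  have "q \<le> lexp B" using lexp_gt_q[of B] by (simp add: B_def)
  moreover have "continuous_on {x..B} lexp"
    by (rule continuous_on_subset[OF continuous_on_lexp]) (use assms in auto)
  moreover have "x \<le> B" by (simp add: B_def)
  ultimately have "\<exists>r. x \<le> r \<and> r \<le> B \<and> lexp r = q"
    using IVT'[of lexp x q B] assms(2) by blast
  then show ?thesis using assms(1) unfolding roots_eq by auto
qed

lemma Phi_nonneg: "0 \<le> Phi nu q"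
proof -
  obtain r where "r \<ge> 0" "r \<in> roots" using root_beyond[of 0] lexp_0 q_nonneg by auto
  then show ?thesis
    unfolding Phi_def roots_def[symmetric] using roots_bdd_above cSup_upper[of r roots] by linarith
qed

lemma laplace_exp_gt_q:
  assumes "Phi nu q < \<beta>"
  shows "q < laplace_exp nu \<beta>"
proof (rule ccontr)
  assume "\<not> q < laplace_exp nu \<beta>"
  moreover have "0 \<le> \<beta>" using Phi_nonneg assms by simp
  ultimately have "lexp \<beta> \<le> q" using laplace_exp_eq by (simp add: lexp_def)
  then obtain r where "r \<ge> \<beta>" "r \<in> roots" using root_beyond \<open>0 \<le> \<beta>\<close> by blast
  then have "r \<le> Phi nu q"
    unfolding Phi_def roots_def[symmetric] using roots_bdd_above cSup_upper by blast
  then show False using assms \<open>r \<ge> \<beta>\<close> by simp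
qed

definition coef :: "nat \<Rightarrow> real" where "coef k = (q + down_tail k) / nu 1"

lemma coef_nonneg: "0 \<le> coef k"
  unfolding coef_def using q_nonneg down_tail_nonneg nu_one_pos by simp

lemma coef_le: "coef k \<le> (q + down_total) / nu 1"
  unfolding coef_def using down_tail_le nu_one_pos by (intro divide_right_mono) auto

text \<open>Generating function of the tails: by summation by parts against down_tail_Suc,
  (1 - z) times it equals down_total - z * down_gen z.\<close>
lemma down_tail_generating:
  assumes "0 \<le> z" "z < 1"
  shows "(\<lambda>k. down_tail k * z ^ k) sums ((down_total - z * down_gen z) / (1 - z))"
proof -
  have "summable (\<lambda>k. down_tail k * z ^ k)"
    by (rule summable_comparison_test'[of "\<lambda>k. down_total * z ^ k" 0])
       (use assms down_tail_nonneg down_tail_le in \<open>auto intro!: summable_mult summable_geometric mult_right_mono\<close>)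
  then obtain S where S: "(\<lambda>k. down_tail k * z ^ k) sums S" by (auto simp: summable_def)
  have gen: "(\<lambda>k. down k * z ^ k) sums down_gen z"
    unfolding down_gen_def by (rule summable_sums[OF summable_down_gen]) (use assms in auto)
  have "(\<lambda>k. down_tail (Suc k) * z ^ Suc k) sums (S - down_total)"
    using S by (subst sums_Suc_iff) (simp add: down_tail_0)
  moreover have "(\<lambda>k. down_tail (Suc k) * z ^ Suc k) sums (z * S - z * down_gen z)"
  proof -
    have "(\<lambda>k. z * (down_tail k * z ^ k) - z * (down k * z ^ k)) sums (z * S - z * down_gen z)"
      by (intro sums_diff sums_mult S gen)
    moreover have "z * (down_tail k * z ^ k) - z * (down k * z ^ k) = down_tail (Suc k) * z ^ Suc k" for k
      using down_tail_Suc[of k] by (simp add: algebra_simps)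
    ultimately show ?thesis by simp
  qed
  ultimately have "S - down_total = z * S - z * down_gen z" by (rule sums_unique2)
  then have "S = (down_total - z * down_gen z) / (1 - z)"
    using assms by (simp add: field_simps)
  then show ?thesis using S by simp
qed

lemma coef_generating:
  assumes "0 \<le> z" "z < 1"
  shows "(\<lambda>k. coef (Suc k) * z ^ Suc k) sums (z * (q + down_total - down_gen z) / (nu 1 * (1 - z)))"
proof -
  have "(\<lambda>k. (q * z ^ k + down_tail k * z ^ k) / nu 1)
      sums ((q * (1 / (1 - z)) + (down_total - z * down_gen z) / (1 - z)) / nu 1)"
    using assms by (intro sums_divide sums_add sums_mult geometric_sums down_tail_generating) auto
  moreover have "(\<lambda>k. (q * z ^ k + down_tail k * z ^ k) / nu 1) = (\<lambda>k. coef k * z ^ k)"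
    by (simp add: coef_def algebra_simps)
  moreover have "(q * (1 / (1 - z)) + (down_total - z * down_gen z) / (1 - z)) / nu 1
      = (q + down_total - z * down_gen z) / ((1 - z) * nu 1)"
    using assms nu_one_pos by (simp add: divide_simps)
  ultimately have "(\<lambda>k. coef k * z ^ k) sums ((q + down_total - z * down_gen z) / ((1 - z) * nu 1))"
    by simp
  then have "(\<lambda>k. coef (Suc k) * z ^ Suc k) sums ((q + down_total - z * down_gen z) / ((1 - z) * nu 1) - coef 0)"
    by (subst sums_Suc_iff) simp
  moreover have "(q + down_total - z * down_gen z) / ((1 - z) * nu 1) - coef 0
      = z * (q + down_total - down_gen z) / (nu 1 * (1 - z))"
    using assms nu_one_pos by (simp add: coef_def down_tail_0 field_simps)
  ultimately show ?thesis by simp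
qed

definition w :: "nat \<Rightarrow> real" where "w = renewal (1 / nu 1) coef"

lemma w_nonneg: "0 \<le> w n"
proof -
  have "1 / nu 1 \<le> w n" unfolding w_def using nu_one_pos by (intro renewal_ge coef_nonneg) simp
  moreover have "0 < 1 / nu 1" using nu_one_pos by simp
  ultimately show ?thesis by linarith
qed

text \<open>Evaluating the generating function of w at z = e^-beta and using the closed
  form of the Laplace exponent yields the defining Laplace transform of the scale function.\<close>
lemma laplace_step_w:
  assumes "Phi nu q < \<beta>"
  shows "((\<lambda>x. exp (- \<beta> * x) * step_fun w x) has_integral
           ((exp \<beta> - 1) / (\<beta> * (laplace_exp nu \<beta> - q)))) {0..}"
proof -
  have "0 < \<beta>" using Phi_nonneg assms by simp
  define z where "z = exp (- \<beta>)"
  have z: "0 < z" "z < 1" using \<open>0 < \<beta>\<close> by (auto simp: z_def)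
  have ze: "z * exp \<beta> = 1" by (simp add: z_def exp_minus)
  define L where "L = laplace_exp nu \<beta>"
  have "q < L" unfolding L_def by (rule laplace_exp_gt_q[OF assms])
  have L: "L = nu 1 * (exp \<beta> - 1) + down_gen z - down_total"
    unfolding L_def z_def using \<open>0 < \<beta>\<close> by (simp add: laplace_exp_eq)
  define C where "C = z * (q + down_total - down_gen z) / (nu 1 * (1 - z))"
  have one_minus_C: "1 - C = z * (L - q) / (nu 1 * (1 - z))"
    using z nu_one_pos ze unfolding C_def L by (simp add: field_simps)
  have "0 < z * (L - q) / (nu 1 * (1 - z))" using z \<open>q < L\<close> nu_one_pos by simp
  then have "C < 1" using one_minus_C by simp
  have "(\<lambda>n. w n * z ^ n) sums (1 / nu 1 / ((1 - z) * (1 - C)))"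
    unfolding w_def C_def using z nu_one_pos coef_nonneg
    by (intro renewal_generating_function coef_generating \<open>C < 1\<close>[unfolded C_def]) auto
  moreover have "(1 - z) * (1 - C) = z * (L - q) / nu 1"
    using z unfolding one_minus_C by simp
  then have "1 / nu 1 / ((1 - z) * (1 - C)) = 1 / (z * (L - q))"
    using nu_one_pos by simp
  ultimately have "(\<lambda>n. w n * exp (- \<beta>) ^ n) sums (1 / (z * (L - q)))" by (simp add: z_def)
  from step_fun_laplace[OF w_nonneg \<open>0 < \<beta>\<close> this]
  have "((\<lambda>x. exp (- \<beta> * x) * step_fun w x) has_integral (1 - z) / \<beta> * (1 / (z * (L - q)))) {0..}"
    by (simp add: z_def)
  moreover have "(1 - z) / \<beta> * (1 / (z * (L - q))) = (exp \<beta> - 1) / (\<beta> * (L - q))"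
    using z ze \<open>0 < \<beta>\<close> \<open>q < L\<close> by (simp add: field_simps)
  ultimately show ?thesis by (simp add: L_def)
qed

lemma step_w_is_scale: "is_scale_W nu q (step_fun w)"
proof -
  have "w n \<le> 1 / nu 1 * (1 + (q + down_total) / nu 1) ^ n" for n
    unfolding w_def using nu_one_pos coef_nonneg coef_le by (intro renewal_geometric_bound) auto
  then have "exp_order (step_fun w)"
    using q_nonneg down_total_nonneg nu_one_pos w_nonneg
    by (intro step_fun_exp_order[where C="1 / nu 1" and M="1 + (q + down_total) / nu 1"]) auto
  moreover have "0 \<le> step_fun w x" for x by (simp add: step_fun_def w_nonneg)
  ultimately show ?thesis
    unfolding is_scale_W_def using laplace_step_w
    by (simp add: step_fun_neg step_fun_right_continuous step_fun_piecewise_constant)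
qed

lemma scale_W_eq: "scale_W nu q = step_fun w"
  unfolding scale_W_def
proof (rule the_equality)
  show "is_scale_W nu q (step_fun w)" by (rule step_w_is_scale)
  show "V = step_fun w" if "is_scale_W nu q V" for V
    using that step_w_is_scale by (rule is_scale_W_unique)
qed

lemma scale_Z_nat: "scale_Z nu q (real m) - 1 = q * (\<Sum>i<m. w i)"
proof -
  have "integral {0..real m} (step_fun w) = (\<Sum>i<m. w i)"
    using step_fun_integral by (rule integral_unique)
  then show ?thesis by (simp add: scale_Z_def scale_W_eq)
qed

lemma scale_W_nat: "scale_W nu q (real m) = w m"
  by (simp add: scale_W_eq step_fun_nat)

lemma scale_W_0: "scale_W nu q 0 = 1 / nu 1"
  using scale_W_nat[of 0] by (simp add: w_def renewal.simps[of _ _ 0])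

lemma coef_tail: "x * (q + tail nu k) / nu 1 = x * coef k"
  by (simp add: coef_def tail_eq_down_tail)

lemma scale_W_rec:
  "scale_W nu q (real m) = scale_W nu q 0 + (\<Sum>k=1..m. scale_W nu q (real (m - k)) * (q + tail nu k) / nu 1)"
  using renewal_rec_reversed[of "1 / nu 1" coef m]
  by (simp only: scale_W_0 scale_W_nat coef_tail w_def)

text \<open>Z^(q) - 1 at the integers is q times the partial sums of w, so its recursion is the
  one for the partial sums of a renewal sequence.\<close>
lemma scale_Z_rec:
  "scale_Z nu q (real (n + 1)) - 1 =
     real (n + 1) * q / nu 1 + (\<Sum>k=1..n. (scale_Z nu q (real (n + 1 - k)) - 1) * (q + tail nu k) / nu 1)"
proof -
  have "scale_Z nu q (real (n + 1)) - 1 = q * (\<Sum>i<Suc n. w i)"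
    by (simp only: scale_Z_nat Suc_eq_plus1)
  also have "\<dots> = q * (real (Suc n) * (1 / nu 1)) + (\<Sum>k=1..n. q * ((\<Sum>i<Suc n - k. w i) * coef k))"
    by (simp only: w_def renewal_partial_sums distrib_left sum_distrib_left)
  also have "\<dots> = real (n + 1) * q / nu 1 +
      (\<Sum>k=1..n. (scale_Z nu q (real (n + 1 - k)) - 1) * (q + tail nu k) / nu 1)"
  proof -
    have "q * ((\<Sum>i<Suc n - k. w i) * coef k)
        = (scale_Z nu q (real (n + 1 - k)) - 1) * (q + tail nu k) / nu 1" for k
      by (simp only: scale_Z_nat Suc_eq_plus1 coef_tail)
    moreover have "q * (real (Suc n) * (1 / nu 1)) = real (n + 1) * q / nu 1" by simp
    ultimately show ?thesis by (simp only:)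
  qed
  finally show ?thesis .
qed

lemma scale_Z_0: "scale_Z nu q 0 - 1 = 0"
  using scale_Z_nat[of 0] by simp

end

theorem corollary3p4:
  fixes nu :: "int \<Rightarrow> real" and q :: real and n :: nat
  assumes "skip_free_levy_measure nu" and "0 \<le> q"
  shows "(scale_W nu q (real (n + 1)) =
           scale_W nu q 0 + (\<Sum>k=1..n+1. scale_W nu q (real (n + 1 - k)) * (q + tail nu k) / nu 1)) \<and>
         (scale_W nu q 0 = 1 / nu 1) \<and>
         (scale_Z nu q (real (n + 1)) - 1 =
           real (n + 1) * q / nu 1 +
           (\<Sum>k=1..n. (scale_Z nu q (real (n + 1 - k)) - 1) * (q + tail nu k) / nu 1)) \<and>
         scale_Z nu q 0 - 1 = 0"
proof -
  interpret skip_free_chain nu q using assms by unfold_locales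
  show ?thesis using scale_W_rec[of "n + 1"] scale_W_0 scale_Z_rec scale_Z_0 by blast
qed

end
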